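(* Suppose the standing assumptions below hold and $g$ is convex. Let $\bm{x}^{k-1},\bm{x}^k\in C$, $\beta_k\in[0,1)$, and $\bm{y}^k:=\bm{x}^k+\beta_k(\bm{x}^k-\bm{x}^{k-1})\in C$. Let $\hat f_k$ be an auxiliary function of $f$ at $\bm{x}^k$ such that $(\hat f_k,\phi)$ is $L_k$-smad on $C$, let $\lambda_k>0$, and let $$\bm{x}^{k+1}\in\operatorname*{argmin}_{\bm{x}\in\overline C}\Big\{\langle\nabla\hat f_k(\bm{y}^k),\bm{x}-\bm{y}^k\rangle+g(\bm{x})+\tfrac1{\lambda_k}D_\phi(\bm{x},\bm{y}^k)\Big\}$$ with $\bm{x}^{k+1}\in C$. Then $$\lambda_k\Psi(\bm{x}^{k+1})\le\lambda_k\Psi(\bm{x}^k)+(1+\lambda_kL_k)D_\phi(\bm{x}^k,\bm{y}^k)-(1-\lambda_kL_k)D_\phi(\bm{x}^{k+1},\bm{y}^k)-D_\phi(\bm{x}^k,\bm{x}^{k+1}).$$ Furthermore, if $D_\phi(\bm{x}^k,\bm{y}^k)\le\rho\,D_\phi(\bm{x}^{k-1},\bm{x}^k)$ for some $\rho\in(0,1]$ (as guaranteed by the adaptive restart scheme), then for every $M>0$, $$\lambda_k\big(\Psi(\bm{x}^{k+1})+MD_\phi(\bm{x}^k,\bm{x}^{k+1})\big)\le\lambda_k\big(\Psi(\bm{x}^k)+MD_\phi(\bm{x}^{k-1},\bm{x}^k)\big)-(\lambda_kM-\rho(1+\lambda_kL_k))D_\phi(\bm{x}^{k-1},\bm{x}^k)-(1-\lambda_kL_k)D_\phi(\bm{x}^{k+1},\bm{y}^k)-(1-\lambda_kM)D_\phi(\bm{x}^k,\bm{x}^{k+1}).$$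 In particular, if $0<\lambda_kL_k<1$ and $\rho(1+\lambda_kL_k)<\lambda_kM<1$, then $\Psi(\bm{x}^{k+1})+MD_\phi(\bm{x}^k,\bm{x}^{k+1})\le\Psi(\bm{x}^k)+MD_\phi(\bm{x}^{k-1},\bm{x}^k)$.
   Context: Let $C\subset\mathbb{R}^n$ be a nonempty open convex set. A function $\phi:\mathbb{R}^n\to(-\infty,+\infty]$ is a kernel generating distance associated with $C$ (written $\phi\in\mathcal{G}(C)$) if $\phi$ is proper, lower semicontinuous and convex with $\operatorname{dom}\phi\subset\overline{C}$ and $\operatorname{dom}\partial\phi=C$, and $\phi$ is $C^1$ on $\operatorname{int}\operatorname{dom}\phi=C$. The Bregman distance is $D_\phi(\bm{x},\bm{y})=\phi(\bm{x})-\phi(\bm{y})-\langle\nabla\phi(\bm{y}),\bm{x}-\bm{y}\rangle$ for $\bm{x}\in\operatorname{dom}\phi$, $\bm{y}\in C$. For $\phi\in\mathcal{G}(C)$ and $h:\mathbb{R}^n\to(-\infty,+\infty]$ proper, lower semicontinuous, with $\operatorname{dom}\phi\subset\operatorname{dom}h$ and $h$ of class $C^1$ on $C$, the pair $(h,\phi)$ is called $L$-smooth adaptable ($L$-smad) on $C$ if $L>0$ and both $L\phi-h$ and $L\phi+h$ are convex on $C$. Given $\bm{y}\in C$, a function $\hat f:\mathbb{R}^n\to(-\infty,+\infty]$ is an auxiliary function of $f$ at $\bm{y}$ if $\hat f$ is proper, lower semicontinuous, $\operatorname{dom}\phi\subset\operatorname{dom}\hat f$, $\hat f$ is $C^1$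 on $C$, $f(\bm{x})\le\hat f(\bm{x})$ for all $\bm{x}\in C$, $\hat f(\bm{y})=f(\bm{y})$ and $\nabla\hat f(\bm{y})=\nabla f(\bm{y})$. Standing assumptions: the problem is $\min_{\bm{x}\in\overline C}\Psi(\bm{x}):=f(\bm{x})+g(\bm{x})$, where (i) $\phi\in\mathcal{G}(C)$ with $\overline{C}=\overline{\operatorname{dom}\phi}$; (ii) $f:\mathbb{R}^n\to(-\infty,+\infty]$ is proper, lower semicontinuous, $\operatorname{dom}\phi\subset\operatorname{dom}f$, and $f$ is $C^1$ on $C$; (iii) $g:\mathbb{R}^n\to(-\infty,+\infty]$ is proper, lower semicontinuous with $\operatorname{dom}g\cap C\neq\emptyset$; (iv) $\inf_{\overline C}\Psi>-\infty$; (v) $\phi+\lambda g$ is supercoercive for every $\lambda>0$. *)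

theory Defs
  imports "HOL-Analysis.Analysis" "HOL-Library.Extended_Real"
begin

text \<open>Extended-real-valued functions on a Euclidean space ('a, i.e. R^n).
  Values in (-inf,+inf] are modelled by ereal; properness excludes -inf.\<close>

definition edom :: "('a \<Rightarrow> ereal) \<Rightarrow> 'a set" where
  "edom f = {x. f x < \<infinity>}"

definition proper_fun :: "('a \<Rightarrow> ereal) \<Rightarrow> bool" where
  "proper_fun f \<longleftrightarrow> (\<forall>x. f x \<noteq> -\<infinity>) \<and> (\<exists>x. f x < \<infinity>)"

definition lsc_fun :: "('a::topological_space \<Rightarrow> ereal) \<Rightarrow> bool" where
  "lsc_fun f \<longleftrightarrow> (\<forall>x X. X \<longlonglongrightarrow> x \<longrightarrow> f x \<le> liminf (\<lambda>n. f (X n)))"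

definition convex_fun :: "('a::real_vector \<Rightarrow> ereal) \<Rightarrow> bool" where
  "convex_fun f \<longleftrightarrow> convex (edom f) \<and> convex_on (edom f) (\<lambda>x. real_of_ereal (f x))"

definition subdiff :: "('a::real_inner \<Rightarrow> ereal) \<Rightarrow> 'a \<Rightarrow> 'a set" where
  "subdiff f x = {v. \<bar>f x\<bar> \<noteq> \<infinity> \<and> (\<forall>z. f z \<ge> f x + ereal (v \<bullet> (z - x)))}"

definition dom_subdiff :: "('a::real_inner \<Rightarrow> ereal) \<Rightarrow> 'a set" where
  "dom_subdiff f = {x. subdiff f x \<noteq> {}}"

definition grad :: "('a::euclidean_space \<Rightarrow> ereal) \<Rightarrow> 'a \<Rightarrow> 'a" where
  "grad f x = (THE v. ((\<lambda>y. real_of_ereal (f y)) has_derivative (\<lambda>h. v \<bullet> h)) (at x))"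

definition C1_on :: "'a::euclidean_space set \<Rightarrow> ('a \<Rightarrow> ereal) \<Rightarrow> bool" where
  "C1_on C f \<longleftrightarrow> (\<forall>x\<in>C. \<bar>f x\<bar> \<noteq> \<infinity>) \<and>
     (\<exists>G. (\<forall>x\<in>C. ((\<lambda>y. real_of_ereal (f y)) has_derivative (\<lambda>h. G x \<bullet> h)) (at x))
          \<and> continuous_on C G)"

definition kernel_gen_dist :: "'a::euclidean_space set \<Rightarrow> ('a \<Rightarrow> ereal) \<Rightarrow> bool" where
  "kernel_gen_dist C \<phi> \<longleftrightarrow> open C \<and> convex C \<and> C \<noteq> {} \<and>
     proper_fun \<phi> \<and> lsc_fun \<phi> \<and> convex_fun \<phi> \<and>
     edom \<phi> \<subseteq> closure C \<and> dom_subdiff \<phi> = C \<and>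
     interior (edom \<phi>) = C \<and> C1_on C \<phi>"

text \<open>Bregman distance D_phi(x,y) (for y in C); equals +inf when phi x = +inf.\<close>
definition bregman :: "('a::euclidean_space \<Rightarrow> ereal) \<Rightarrow> 'a \<Rightarrow> 'a \<Rightarrow> ereal" where
  "bregman \<phi> x y = \<phi> x - ereal (real_of_ereal (\<phi> y) + grad \<phi> y \<bullet> (x - y))"

definition smad :: "'a::euclidean_space set \<Rightarrow> ('a \<Rightarrow> ereal) \<Rightarrow> ('a \<Rightarrow> ereal) \<Rightarrow> real \<Rightarrow> bool" where
  "smad C h \<phi> L \<longleftrightarrow> kernel_gen_dist C \<phi> \<and> proper_fun h \<and> lsc_fun h \<and>
     edom \<phi> \<subseteq> edom h \<and> C1_on C h \<and> L > 0 \<and>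
     convex_on C (\<lambda>x. L * real_of_ereal (\<phi> x) - real_of_ereal (h x)) \<and>
     convex_on C (\<lambda>x. L * real_of_ereal (\<phi> x) + real_of_ereal (h x))"

definition aux_fun :: "'a::euclidean_space set \<Rightarrow> ('a \<Rightarrow> ereal) \<Rightarrow> ('a \<Rightarrow> ereal) \<Rightarrow> 'a \<Rightarrow> ('a \<Rightarrow> ereal) \<Rightarrow> bool" where
  "aux_fun C \<phi> f y fh \<longleftrightarrow> y \<in> C \<and> proper_fun fh \<and> lsc_fun fh \<and> edom \<phi> \<subseteq> edom fh \<and>
     C1_on C fh \<and> (\<forall>x\<in>C. f x \<le> fh x) \<and> fh y = f y \<and> grad fh y = grad f y"

definition supercoercive :: "('a::real_normed_vector \<Rightarrow> ereal) \<Rightarrow> bool" where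
  "supercoercive F \<longleftrightarrow> (\<forall>M::real. \<exists>R>0. \<forall>x. R \<le> norm x \<longrightarrow> ereal (M * norm x) \<le> F x)"

definition standing_assumptions :: "'a::euclidean_space set \<Rightarrow> ('a \<Rightarrow> ereal) \<Rightarrow> ('a \<Rightarrow> ereal) \<Rightarrow> ('a \<Rightarrow> ereal) \<Rightarrow> bool" where
  "standing_assumptions C \<phi> f g \<longleftrightarrow>
     kernel_gen_dist C \<phi> \<and> closure C = closure (edom \<phi>) \<and>
     proper_fun f \<and> lsc_fun f \<and> edom \<phi> \<subseteq> edom f \<and> C1_on C f \<and>
     proper_fun g \<and> lsc_fun g \<and> edom g \<inter> C \<noteq> {} \<and>
     (\<exists>m::real. \<forall>x\<in>closure C. ereal m \<le> f x + g x) \<and>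
     (\<forall>t>0. supercoercive (\<lambda>x. \<phi> x + ereal t * g x))"

end

theory Submission
  imports Defs
begin

text \<open>Write \<open>x\<^sup>+\<close> for the new iterate and \<open>D\<close> for the Bregman distance. The first-order
  optimality condition of the proximal subproblem at \<open>x\<^sup>+\<close>, tested in the direction of \<open>x\<^sup>k\<close>
  and rewritten with the three-point identity of \<open>D\<close>, gives
  \<open>\<lambda>(g(x\<^sup>+) - g(x\<^sup>k)) \<le> \<lambda>\<langle>\<nabla>f\<^sub>k(y), x\<^sup>k - x\<^sup>+\<rangle> + D(x\<^sup>k,y) - D(x\<^sup>k,x\<^sup>+) - D(x\<^sup>+,y)\<close>.
  Convexity of \<open>L\<phi> \<mp> f\<^sub>k\<close>, linearised at \<open>y\<close>, bounds \<open>f\<^sub>k(x\<^sup>+) - f\<^sub>k(x\<^sup>k)\<close> by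
  \<open>\<langle>\<nabla>f\<^sub>k(y), x\<^sup>+ - x\<^sup>k\<rangle> + L(D(x\<^sup>+,y) + D(x\<^sup>k,y))\<close>; together with \<open>f \<le> f\<^sub>k\<close> and
  \<open>f(x\<^sup>k) = f\<^sub>k(x\<^sup>k)\<close> the inner products cancel on adding, which is the first inequality.
  The second is linear arithmetic with the restart condition.\<close>

lemma has_derivative_directional_lower_bound:
  fixes F :: "'a::real_inner \<Rightarrow> real"
  assumes F: "(F has_derivative (\<lambda>h. v \<bullet> h)) (at x)"
    and incr: "\<And>t. 0 < t \<Longrightarrow> t \<le> 1 \<Longrightarrow> t * c \<le> F (x + t *\<^sub>R d) - F x"
  shows "c \<le> v \<bullet> d"
proof -
  have line: "((\<lambda>t. x + t *\<^sub>R d) has_derivative (\<lambda>t. t *\<^sub>R d)) (at 0)"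
    by (auto intro!: derivative_eq_intros)
  have "(F has_derivative (\<lambda>h. v \<bullet> h)) (at (x + 0 *\<^sub>R d))"
    using F by simp
  from has_derivative_compose[OF line this]
  have "((\<lambda>t. F (x + t *\<^sub>R d)) has_derivative (\<lambda>t. (v \<bullet> d) * t)) (at 0)"
    by (simp add: o_def mult.commute)
  hence "((\<lambda>t. F (x + t *\<^sub>R d)) has_field_derivative v \<bullet> d) (at 0)"
    by (simp add: has_field_derivative_def)
  hence "((\<lambda>t. (F (x + t *\<^sub>R d) - F x) / t) \<longlongrightarrow> v \<bullet> d) (at_right 0)"
    by (auto simp: DERIV_def intro: filterlim_mono at_le)
  moreover have "\<forall>\<^sub>F t in at_right 0. c \<le> (F (x + t *\<^sub>R d) - F x) / t"
    using eventually_at_right_real[of 0 "1::real"]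
    by (rule eventually_mono) (auto simp: pos_le_divide_eq mult.commute intro: incr)
  ultimately show ?thesis
    by (intro tendsto_le[OF _ _ tendsto_const]) simp_all
qed

lemma convex_on_above_tangent:
  fixes F :: "'a::real_inner \<Rightarrow> real"
  assumes conv: "convex_on S F" and "x \<in> S" "z \<in> S"
    and F: "(F has_derivative (\<lambda>h. v \<bullet> h)) (at x)"
  shows "F x + v \<bullet> (z - x) \<le> F z"
proof -
  have "((\<lambda>w. - F w) has_derivative (\<lambda>h. (- v) \<bullet> h)) (at x)"
    using has_derivative_minus[OF F] by simp
  moreover have "t * (F x - F z) \<le> - F (x + t *\<^sub>R (z - x)) - - F x" if "0 < t" "t \<le> 1" for t
  proof -
    have "F ((1 - t) *\<^sub>R x + t *\<^sub>R z) \<le> (1 - t) * F x + t * F z"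
      using that assms by (intro convex_onD) auto
    moreover have "(1 - t) *\<^sub>R x + t *\<^sub>R z = x + t *\<^sub>R (z - x)"
      by (simp add: algebra_simps)
    ultimately show ?thesis by (simp add: algebra_simps)
  qed
  ultimately have "F x - F z \<le> (- v) \<bullet> (z - x)"
    by (rule has_derivative_directional_lower_bound)
  thus ?thesis by simp
qed

lemma convex_sum_min_variational_ineq:
  fixes F R :: "'a::real_inner \<Rightarrow> real"
  assumes conv: "convex_on S R" and "x \<in> S" "z \<in> S"
    and F: "(F has_derivative (\<lambda>h. v \<bullet> h)) (at x)"
    and min: "\<And>w. w \<in> S \<Longrightarrow> F x + R x \<le> F w + R w"
  shows "R x - R z \<le> v \<bullet> (z - x)"
proof (rule has_derivative_directional_lower_bound[OF F])
  fix t :: real assume t: "0 < t" "t \<le> 1"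
  have w: "(1 - t) *\<^sub>R x + t *\<^sub>R z = x + t *\<^sub>R (z - x)"
    by (simp add: algebra_simps)
  have "(1 - t) *\<^sub>R x + t *\<^sub>R z \<in> S"
    using t assms convex_on_imp_convex[OF conv] by (intro convexD) auto
  hence "F x + R x \<le> F (x + t *\<^sub>R (z - x)) + R (x + t *\<^sub>R (z - x))"
    by (simp add: w min)
  moreover have "R (x + t *\<^sub>R (z - x)) \<le> (1 - t) * R x + t * R z"
    unfolding w[symmetric] using t assms by (intro convex_onD) auto
  ultimately show "t * (R x - R z) \<le> F (x + t *\<^sub>R (z - x)) - F x"
    by (simp add: algebra_simps)
qed

definition bregman_dist :: "('a::real_inner \<Rightarrow> real) \<Rightarrow> ('a \<Rightarrow> 'a) \<Rightarrow> 'a \<Rightarrow> 'a \<Rightarrow> real" where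
  "bregman_dist \<Phi> \<Phi>' x z = \<Phi> x - \<Phi> z - \<Phi>' z \<bullet> (x - z)"

lemma bregman_dist_three_point:
  "bregman_dist \<Phi> \<Phi>' x y - bregman_dist \<Phi> \<Phi>' x z - bregman_dist \<Phi> \<Phi>' z y
     = (\<Phi>' z - \<Phi>' y) \<bullet> (x - z)"
  unfolding bregman_dist_def by (simp add: inner_diff_left inner_diff_right)

lemma bregman_dist_nonneg:
  assumes "convex_on S \<Phi>" "x \<in> S" "z \<in> S"
    and "(\<Phi> has_derivative (\<lambda>h. \<Phi>' z \<bullet> h)) (at z)"
  shows "0 \<le> bregman_dist \<Phi> \<Phi>' x z"
  using convex_on_above_tangent[OF assms(1,3,2,4)] unfolding bregman_dist_def by simp

lemma smad_descent:
  fixes \<Phi> H :: "'a::real_inner \<Rightarrow> real"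
  assumes conv_minus: "convex_on S (\<lambda>x. L * \<Phi> x - H x)"
    and conv_plus: "convex_on S (\<lambda>x. L * \<Phi> x + H x)"
    and S: "y \<in> S" "u \<in> S" "w \<in> S"
    and \<Phi>: "(\<Phi> has_derivative (\<lambda>h. \<Phi>' y \<bullet> h)) (at y)"
    and H: "(H has_derivative (\<lambda>h. q \<bullet> h)) (at y)"
  shows "H u \<le> H w + q \<bullet> (u - w) + L * bregman_dist \<Phi> \<Phi>' u y + L * bregman_dist \<Phi> \<Phi>' w y"
proof -
  have "((\<lambda>x. L * \<Phi> x - H x) has_derivative (\<lambda>h. (L *\<^sub>R \<Phi>' y - q) \<bullet> h)) (at y)"
    using \<Phi> H by (auto intro!: derivative_eq_intros simp: algebra_simps inner_diff_left)
  from convex_on_above_tangent[OF conv_minus S(1,2) this]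
  have "L * \<Phi> y - H y + (L *\<^sub>R \<Phi>' y - q) \<bullet> (u - y) \<le> L * \<Phi> u - H u" .
  moreover have "((\<lambda>x. L * \<Phi> x + H x) has_derivative (\<lambda>h. (L *\<^sub>R \<Phi>' y + q) \<bullet> h)) (at y)"
    using \<Phi> H by (auto intro!: derivative_eq_intros simp: algebra_simps inner_add_left)
  from convex_on_above_tangent[OF conv_plus S(1,3) this]
  have "L * \<Phi> y + H y + (L *\<^sub>R \<Phi>' y + q) \<bullet> (w - y) \<le> L * \<Phi> w + H w" .
  ultimately show ?thesis
    unfolding bregman_dist_def
    by (simp add: inner_diff_left inner_add_left inner_diff_right algebra_simps)
qed

lemma bregman_prox_three_point:
  fixes \<Phi> R :: "'a::real_inner \<Rightarrow> real"
  assumes conv: "convex_on S R" and S: "x \<in> S" "z \<in> S" and lam: "lam > 0"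
    and \<Phi>: "(\<Phi> has_derivative (\<lambda>h. \<Phi>' x \<bullet> h)) (at x)"
    and min: "\<And>w. w \<in> S \<Longrightarrow> a \<bullet> (x - y) + R x + (1 / lam) * bregman_dist \<Phi> \<Phi>' x y
                              \<le> a \<bullet> (w - y) + R w + (1 / lam) * bregman_dist \<Phi> \<Phi>' w y"
  shows "lam * (R x - R z) \<le> lam * (a \<bullet> (z - x))
           + bregman_dist \<Phi> \<Phi>' z y - bregman_dist \<Phi> \<Phi>' z x - bregman_dist \<Phi> \<Phi>' x y"
proof -
  define F where "F w = a \<bullet> (w - y) + (1 / lam) * bregman_dist \<Phi> \<Phi>' w y" for w
  have "(F has_derivative (\<lambda>h. (a + (1 / lam) *\<^sub>R (\<Phi>' x - \<Phi>' y)) \<bullet> h)) (at x)"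
    unfolding F_def bregman_dist_def using \<Phi> lam
    by (auto intro!: derivative_eq_intros simp: algebra_simps inner_diff_left inner_add_left)
  from convex_sum_min_variational_ineq[OF conv S this]
  have "R x - R z \<le> (a + (1 / lam) *\<^sub>R (\<Phi>' x - \<Phi>' y)) \<bullet> (z - x)"
    using min by (simp add: F_def algebra_simps)
  hence "lam * (R x - R z) \<le> lam * ((a + (1 / lam) *\<^sub>R (\<Phi>' x - \<Phi>' y)) \<bullet> (z - x))"
    using lam by (simp add: mult_left_mono)
  also have "\<dots> = lam * (a \<bullet> (z - x)) + (\<Phi>' x - \<Phi>' y) \<bullet> (z - x)"
    using lam by (simp add: inner_add_left distrib_left)
  finally show ?thesis
    using bregman_dist_three_point[of \<Phi> \<Phi>' z y x] by simp
qed

lemma grad_eqI: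
  assumes "((\<lambda>y. real_of_ereal (F y)) has_derivative (\<lambda>h. v \<bullet> h)) (at x)"
  shows "grad F x = v"
  unfolding grad_def
proof (rule the_equality)
  fix w assume "((\<lambda>y. real_of_ereal (F y)) has_derivative (\<lambda>h. w \<bullet> h)) (at x)"
  from has_derivative_unique[OF assms this] have "v \<bullet> (v - w) = w \<bullet> (v - w)"
    by metis
  hence "(v - w) \<bullet> (v - w) = 0" by (simp add: inner_diff_left)
  thus "w = v" by simp
qed (rule assms)

lemma C1_on_finite: "C1_on C f \<Longrightarrow> x \<in> C \<Longrightarrow> \<bar>f x\<bar> \<noteq> \<infinity>"
  unfolding C1_on_def by simp

lemma C1_on_has_derivative_grad:
  assumes "C1_on C f" "x \<in> C"
  shows "((\<lambda>y. real_of_ereal (f y)) has_derivative (\<lambda>h. grad f x \<bullet> h)) (at x)"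
proof -
  from assms obtain G where G: "((\<lambda>y. real_of_ereal (f y)) has_derivative (\<lambda>h. G \<bullet> h)) (at x)"
    unfolding C1_on_def by blast
  moreover from G have "grad f x = G" by (rule grad_eqI)
  ultimately show ?thesis by simp
qed

lemma bregman_eq_bregman_dist:
  "\<bar>\<phi> x\<bar> \<noteq> \<infinity> \<Longrightarrow>
     bregman \<phi> x z = ereal (bregman_dist (\<lambda>x. real_of_ereal (\<phi> x)) (grad \<phi>) x z)"
  unfolding bregman_def bregman_dist_def by (cases "\<phi> x") auto

lemma kernel_gen_dist_convex_on:
  assumes "kernel_gen_dist C \<phi>"
  shows "convex_on C (\<lambda>x. real_of_ereal (\<phi> x))"
proof -
  from assms have "interior (edom \<phi>) = C" "convex_fun \<phi>" "convex C"
    unfolding kernel_gen_dist_def by auto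
  then have "convex_on (edom \<phi>) (\<lambda>x. real_of_ereal (\<phi> x))" "C \<subseteq> edom \<phi>" "convex C"
    unfolding convex_fun_def using interior_subset by auto
  thus ?thesis by (rule convex_on_subset)
qed

lemma kernel_gen_dist_bregman:
  assumes \<phi>: "kernel_gen_dist C \<phi>" and "x \<in> C" "z \<in> C"
  defines "D \<equiv> bregman_dist (\<lambda>x. real_of_ereal (\<phi> x)) (grad \<phi>)"
  shows "bregman \<phi> x z = ereal (D x z)" and "0 \<le> D x z"
proof -
  have "C1_on C \<phi>" using \<phi> unfolding kernel_gen_dist_def by blast
  show "bregman \<phi> x z = ereal (D x z)"
    unfolding D_def using C1_on_finite[OF \<open>C1_on C \<phi>\<close> assms(2)]
    by (rule bregman_eq_bregman_dist)
  show "0 \<le> D x z"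
    unfolding D_def
    using bregman_dist_nonneg[where \<Phi>'="grad \<phi>", OF kernel_gen_dist_convex_on[OF \<phi>] assms(2,3)
        C1_on_has_derivative_grad[OF \<open>C1_on C \<phi>\<close> assms(3)]] .
qed

lemma proper_fun_edom_eq_ereal:
  "proper_fun g \<Longrightarrow> x \<in> edom g \<Longrightarrow> g x = ereal (real_of_ereal (g x))"
  unfolding proper_fun_def edom_def by (cases "g x") auto

lemma bregman_prox_step_descent:
  fixes C :: "'a::euclidean_space set" and \<phi> f g fh :: "'a \<Rightarrow> ereal"
  assumes \<phi>: "kernel_gen_dist C \<phi>" and f: "C1_on C f"
    and g: "convex_fun g" "proper_fun g"
    and C: "xk \<in> C" "y \<in> C" "xn \<in> C"
    and aux: "aux_fun C \<phi> f xk fh" and sm: "smad C fh \<phi> L" and lam: "lam > 0"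
    and min: "\<forall>x\<in>C. ereal (grad fh y \<bullet> (xn - y)) + g xn + ereal (1 / lam) * bregman \<phi> xn y
                   \<le> ereal (grad fh y \<bullet> (x - y)) + g x + ereal (1 / lam) * bregman \<phi> x y"
    and gk: "g xk \<noteq> \<infinity>"
  defines "D \<equiv> bregman_dist (\<lambda>x. real_of_ereal (\<phi> x)) (grad \<phi>)"
  shows "g xn \<noteq> \<infinity>"
    and "lam * (real_of_ereal (f xn) + real_of_ereal (g xn))
           \<le> lam * (real_of_ereal (f xk) + real_of_ereal (g xk))
              + (1 + lam * L) * D xk y - (1 - lam * L) * D xn y - D xk xn"
proof -
  define R where "R x = real_of_ereal (g x)" for x
  define S where "S = C \<inter> edom g"
  define a where "a = grad fh y"
  have breg: "bregman \<phi> x z = ereal (D x z)" if "x \<in> C" "z \<in> C" for x z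
    unfolding D_def using kernel_gen_dist_bregman(1)[OF \<phi> that] .
  have gR: "g x = ereal (R x)" if "x \<in> edom g" for x
    unfolding R_def using proper_fun_edom_eq_ereal[OF g(2) that] .
  have xkS: "xk \<in> S" using C gk unfolding S_def edom_def by (simp add: less_top)
  show "g xn \<noteq> \<infinity>"
  proof
    assume "g xn = \<infinity>"
    with min C xkS show False unfolding S_def by (force simp: breg gR)
  qed
  hence xnS: "xn \<in> S" using C unfolding S_def edom_def by (simp add: less_top)
  have min_real:
    "a \<bullet> (xn - y) + R xn + (1 / lam) * D xn y \<le> a \<bullet> (w - y) + R w + (1 / lam) * D w y"
    if "w \<in> S" for w
    using min C that xnS unfolding S_def a_def by (force simp: breg gR)
  have "convex_on S R"
  proof (rule convex_on_subset)
    show "convex_on (edom g) R" using g(1) unfolding convex_fun_def R_def by simp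
    show "convex S" using \<phi> g(1) unfolding S_def kernel_gen_dist_def convex_fun_def
      by (auto intro: convex_Int)
  qed (auto simp: S_def)
  moreover have \<phi>C1: "C1_on C \<phi>" using \<phi> unfolding kernel_gen_dist_def by simp
  ultimately have three:
    "lam * (R xn - R xk) \<le> lam * (a \<bullet> (xk - xn)) + D xk y - D xk xn - D xn y"
    using bregman_prox_three_point[where \<Phi>'="grad \<phi>",
        OF _ xnS xkS lam C1_on_has_derivative_grad[OF \<phi>C1 C(3)]] min_real
    unfolding D_def by blast
  from sm have fhC1: "C1_on C fh"
    and cv_minus: "convex_on C (\<lambda>x. L * real_of_ereal (\<phi> x) - real_of_ereal (fh x))"
    and cv_plus: "convex_on C (\<lambda>x. L * real_of_ereal (\<phi> x) + real_of_ereal (fh x))"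
    unfolding smad_def by auto
  have "real_of_ereal (fh xn) \<le> real_of_ereal (fh xk) + a \<bullet> (xn - xk) + L * D xn y + L * D xk y"
    using smad_descent[where \<Phi>'="grad \<phi>", OF cv_minus cv_plus C(2,3,1)
        C1_on_has_derivative_grad[OF \<phi>C1 C(2)] C1_on_has_derivative_grad[OF fhC1 C(2)]]
    unfolding D_def a_def .
  moreover have "real_of_ereal (f xn) \<le> real_of_ereal (fh xn)"
    using aux C C1_on_finite[OF f] C1_on_finite[OF fhC1] unfolding aux_fun_def
    by (metis ereal_real ereal_less_eq(3))
  moreover have "real_of_ereal (f xk) = real_of_ereal (fh xk)"
    using aux unfolding aux_fun_def by simp
  ultimately have "lam * real_of_ereal (f xn)
      \<le> lam * (real_of_ereal (f xk) + a \<bullet> (xn - xk) + L * D xn y + L * D xk y)"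
    using lam by (simp add: mult_left_mono)
  with three show "lam * (real_of_ereal (f xn) + real_of_ereal (g xn))
           \<le> lam * (real_of_ereal (f xk) + real_of_ereal (g xk))
              + (1 + lam * L) * D xk y - (1 - lam * L) * D xn y - D xk xn"
    unfolding R_def by (simp add: algebra_simps inner_diff_right)
qed

lemma lyapunov_decrease:
  fixes lam L \<rho> M \<Psi>n \<Psi>k Dky Dny Dkn Dpk :: real
  assumes descent: "lam * \<Psi>n \<le> lam * \<Psi>k + (1 + lam * L) * Dky - (1 - lam * L) * Dny - Dkn"
    and lam: "lam > 0" and L: "L > 0" and restart: "Dky \<le> \<rho> * Dpk"
  shows "lam * (\<Psi>n + M * Dkn) \<le> lam * (\<Psi>k + M * Dpk) - (lam * M - \<rho> * (1 + lam * L)) * Dpk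
           - (1 - lam * L) * Dny - (1 - lam * M) * Dkn"
proof -
  have "(1 + lam * L) * Dky \<le> (1 + lam * L) * (\<rho> * Dpk)"
    using restart lam L by (intro mult_left_mono) auto
  thus ?thesis using descent by (simp add: algebra_simps)
qed

lemma lyapunov_monotone:
  fixes lam L \<rho> M \<Psi>n \<Psi>k Dny Dkn Dpk :: real
  assumes decrease: "lam * (\<Psi>n + M * Dkn) \<le> lam * (\<Psi>k + M * Dpk) - (lam * M - \<rho> * (1 + lam * L)) * Dpk
           - (1 - lam * L) * Dny - (1 - lam * M) * Dkn"
    and lam: "lam > 0" and "0 \<le> Dny" "0 \<le> Dkn" "0 \<le> Dpk"
    and "lam * L < 1" "\<rho> * (1 + lam * L) < lam * M" "lam * M < 1"
  shows "\<Psi>n + M * Dkn \<le> \<Psi>k + M * Dpk"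
proof -
  have "0 \<le> (lam * M - \<rho> * (1 + lam * L)) * Dpk + (1 - lam * L) * Dny + (1 - lam * M) * Dkn"
    using assms by simp
  hence "lam * (\<Psi>n + M * Dkn) \<le> lam * (\<Psi>k + M * Dpk)"
    using decrease by linarith
  thus ?thesis using lam by simp
qed

theorem mainTheorem3:
  fixes C :: "'a::euclidean_space set"
    and \<phi> f g fh :: "'a \<Rightarrow> ereal"
    and xprev xk y xnext :: 'a
    and \<beta> lam L :: real
  assumes SA: "standing_assumptions C \<phi> f g"
    and gconv: "convex_fun g"
    and xprev: "xprev \<in> C" and xk: "xk \<in> C"
    and beta: "0 \<le> \<beta>" "\<beta> < 1"
    and ydef: "y = xk + \<beta> *\<^sub>R (xk - xprev)" and yC: "y \<in> C"
    and aux: "aux_fun C \<phi> f xk fh"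
    and sm: "smad C fh \<phi> L"
    and lam: "lam > 0"
    and xnext_cl: "xnext \<in> closure C"
    and xnext_min: "\<forall>x\<in>closure C.
          ereal (grad fh y \<bullet> (xnext - y)) + g xnext + ereal (1 / lam) * bregman \<phi> xnext y
        \<le> ereal (grad fh y \<bullet> (x - y)) + g x + ereal (1 / lam) * bregman \<phi> x y"
    and xnextC: "xnext \<in> C"
  shows "ereal lam * (f xnext + g xnext)
           \<le> ereal lam * (f xk + g xk) + ereal (1 + lam * L) * bregman \<phi> xk y
              - ereal (1 - lam * L) * bregman \<phi> xnext y - bregman \<phi> xk xnext
       \<and> (\<forall>\<rho> M. 0 < \<rho> \<and> \<rho> \<le> 1 \<and> bregman \<phi> xk y \<le> ereal \<rho> * bregman \<phi> xprev xk \<and> M > 0 \<longrightarrow>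
           (
           ereal lam * (f xnext + g xnext + ereal M * bregman \<phi> xk xnext)
           \<le> ereal lam * (f xk + g xk + ereal M * bregman \<phi> xprev xk)
              - ereal (lam * M - \<rho> * (1 + lam * L)) * bregman \<phi> xprev xk
              - ereal (1 - lam * L) * bregman \<phi> xnext y
              - ereal (1 - lam * M) * bregman \<phi> xk xnext
           \<and> (0 < lam * L \<and> lam * L < 1 \<and> \<rho> * (1 + lam * L) < lam * M \<and> lam * M < 1 \<longrightarrow>
                f xnext + g xnext + ereal M * bregman \<phi> xk xnext
                \<le> f xk + g xk + ereal M * bregman \<phi> xprev xk)))"
proof -
  from SA have \<phi>: "kernel_gen_dist C \<phi>" and f: "C1_on C f" and g: "proper_fun g"
    unfolding standing_assumptions_def by auto
  have L: "L > 0" using sm unfolding smad_def by simp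
  define D where "D = bregman_dist (\<lambda>x. real_of_ereal (\<phi> x)) (grad \<phi>)"
  have breg: "bregman \<phi> x z = ereal (D x z)" "0 \<le> D x z" if "x \<in> C" "z \<in> C" for x z
    using kernel_gen_dist_bregman[OF \<phi> that] unfolding D_def by auto
  have min: "\<forall>x\<in>C. ereal (grad fh y \<bullet> (xnext - y)) + g xnext + ereal (1 / lam) * bregman \<phi> xnext y
        \<le> ereal (grad fh y \<bullet> (x - y)) + g x + ereal (1 / lam) * bregman \<phi> x y"
    using xnext_min closure_subset by blast
  obtain fk fn where fk: "f xk = ereal fk" and fn: "f xnext = ereal fn"
    using C1_on_finite[OF f xk] C1_on_finite[OF f xnextC] by (cases "f xk"; cases "f xnext") auto
  show ?thesis
  proof (cases "g xk = \<infinity>")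
    case True
    have "g xnext \<noteq> - \<infinity>" using g unfolding proper_fun_def by simp
    then show ?thesis
      using True lam by (simp add: breg xk xnextC xprev yC fk fn)
  next
    case False
    note step = bregman_prox_step_descent[OF \<phi> f gconv g xk yC xnextC aux sm lam min False]
    obtain gk gn where gk: "g xk = ereal gk" and gn: "g xnext = ereal gn"
      using g step(1) False unfolding proper_fun_def by (cases "g xk"; cases "g xnext") auto
    have descent: "lam * (fn + gn) \<le> lam * (fk + gk)
        + (1 + lam * L) * D xk y - (1 - lam * L) * D xnext y - D xk xnext"
      using step(2) unfolding D_def by (simp add: fk fn gk gn)
    note decrease = lyapunov_decrease[OF descent lam L]
    show ?thesis
      using descent decrease lyapunov_monotone[OF decrease lam] breg(2)[OF xprev xk]
      by (auto simp: breg xk xnextC xprev yC fk fn gk gn)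
  qed
qed

end
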